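(* Let $\mathcal{X}=L^p$ for some $p\in\{0,1,\infty\}$, let $\varphi$ be a dynamic LM-measure on $\mathcal{X}$ and let $\mu$ be a projective update rule. If $\varphi$ is $\mu$-acceptance time consistent, then $\varphi$ is weakly acceptance time consistent, i.e. for all $X\in\mathcal{X}$, $s>t$, $m_s\in\bar L^0_s$: $\varphi_s(X)\ge m_s\Rightarrow\varphi_t(X)\ge\operatorname{Essinf}_tm_s$. If $\varphi$ is $\mu$-rejection time consistent, then $\varphi$ is weakly rejection time consistent, i.e. $\varphi_s(X)\le m_s\Rightarrow\varphi_t(X)\le\operatorname{Esssup}_tm_s$ for all such $X,s,t,m_s$.
   Context: Let $(\Omega,\mathcal{F},\{\mathcal{F}_t\}_{t\in\mathbb{T}},P)$ be a filtered probability space, $\mathbb{T}=\{0,\dots,T\}$, $\mathcal{F}_0$ trivial. $\bar L^0_t$ denotes $\mathcal{F}_t$-measurable random variables with values in $[-\infty,\infty]$, $\bar L^0=\bar L^0_T$, $L^p=L^p(\Omega,\mathcal{F}_T,P)$. A dynamic LM-measure is a family $\{\varphi_t\}_{t\in\mathbb{T}}$ of maps $\varphi_t:\mathcal{X}\to\bar L^0_t$ with $1_A\varphi_t(X)=1_A\varphi_t(1_AX)$ for $A\in\mathcal{F}_t$ and $X\le Y\Rightarrow\varphi_t(X)\le\varphi_t(Y)$. An update rule is a family $\{\mu_{t,s}:s>t\}$ of maps $\mu_{t,s}:\bar L^0_s\times\mathcal{X}\to\bar L^0_t$ with $1_A\mu_{t,s}(m,X)=1_A\mu_{t,s}(1_Am,X)$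 for $A\in\mathcal{F}_t$ and $m\ge m'\Rightarrow\mu_{t,s}(m,X)\ge\mu_{t,s}(m',X)$; it is projective if there are maps $\mu_t:\bar L^0\to\bar L^0_t$ with $\mu_{t,s}(m,X)=\mu_t(m)$ for all $s>t$, $X$, $m\in\bar L^0_s$, and $\mu_t(m_t)=m_t$ for $m_t\in\bar L^0_t$. $\varphi$ is $\mu$-acceptance (resp. $\mu$-rejection) time consistent if for all $s>t$, $X$, $m_s\in\bar L^0_s$: $\varphi_s(X)\ge m_s\Rightarrow\varphi_t(X)\ge\mu_{t,s}(m_s,X)$ (resp. with $\le$). $\operatorname{Essinf}_t$ on bounded variables: the largest $\mathcal{F}_t$-measurable random variable a.s. dominated by the argument; on $\bar L^0$: $\operatorname{Essinf}_tX:=\lim_n\operatorname{Essinf}_t(X^+\wedge n)-\lim_n\operatorname{Esssup}_t(X^-\wedge n)$, with $\operatorname{Esssup}_tX=-\operatorname{Essinf}_t(-X)$ and convention $\infty-\infty=-\infty$. *)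

theory Defs
  imports "HOL-Probability.Probability"
begin

(* Random variables are modelled by representatives; all (in)equalities are P-a.s. *)

definition filtered_setting :: "'a measure \<Rightarrow> (nat \<Rightarrow> 'a measure) \<Rightarrow> nat \<Rightarrow> bool" where
  "filtered_setting M F T \<longleftrightarrow> prob_space M
     \<and> (\<forall>t\<le>T. subalgebra M (F t))
     \<and> (\<forall>s t. s \<le> t \<and> t \<le> T \<longrightarrow> sets (F s) \<subseteq> sets (F t))
     \<and> sets (F 0) = {{}, space M}"

definition L0bar :: "(nat \<Rightarrow> 'a measure) \<Rightarrow> nat \<Rightarrow> ('a \<Rightarrow> ereal) set" where
  "L0bar F t = borel_measurable (F t)"

definition Lp_space :: "'a measure \<Rightarrow> (nat \<Rightarrow> 'a measure) \<Rightarrow> nat \<Rightarrow> ennreal \<Rightarrow> ('a \<Rightarrow> real) set" where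
  "Lp_space M F T p = {X. X \<in> borel_measurable (F T)
      \<and> (p = 1 \<longrightarrow> integrable M X)
      \<and> (p = \<infinity> \<longrightarrow> (\<exists>C. AE \<omega> in M. \<bar>X \<omega>\<bar> \<le> C))}"

definition dynamic_LM_measure ::
  "'a measure \<Rightarrow> (nat \<Rightarrow> 'a measure) \<Rightarrow> nat \<Rightarrow> ('a \<Rightarrow> real) set
     \<Rightarrow> (nat \<Rightarrow> ('a \<Rightarrow> real) \<Rightarrow> ('a \<Rightarrow> ereal)) \<Rightarrow> bool" where
  "dynamic_LM_measure M F T \<X> \<phi> \<longleftrightarrow>
     (\<forall>t\<le>T. \<forall>X\<in>\<X>. \<phi> t X \<in> L0bar F t)
   \<and> (\<forall>t\<le>T. \<forall>A\<in>sets (F t). \<forall>X\<in>\<X>.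
        AE \<omega> in M. \<omega> \<in> A \<longrightarrow> \<phi> t X \<omega> = \<phi> t (\<lambda>x. if x \<in> A then X x else 0) \<omega>)
   \<and> (\<forall>t\<le>T. \<forall>X\<in>\<X>. \<forall>Y\<in>\<X>. (AE \<omega> in M. X \<omega> \<le> Y \<omega>) \<longrightarrow>
        (AE \<omega> in M. \<phi> t X \<omega> \<le> \<phi> t Y \<omega>))"

definition update_rule ::
  "'a measure \<Rightarrow> (nat \<Rightarrow> 'a measure) \<Rightarrow> nat \<Rightarrow> ('a \<Rightarrow> real) set
     \<Rightarrow> (nat \<Rightarrow> nat \<Rightarrow> ('a \<Rightarrow> ereal) \<Rightarrow> ('a \<Rightarrow> real) \<Rightarrow> ('a \<Rightarrow> ereal)) \<Rightarrow> bool" where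
  "update_rule M F T \<X> \<mu> \<longleftrightarrow>
     (\<forall>t s. t < s \<and> s \<le> T \<longrightarrow>
        (\<forall>m\<in>L0bar F s. \<forall>X\<in>\<X>. \<mu> t s m X \<in> L0bar F t)
      \<and> (\<forall>A\<in>sets (F t). \<forall>m\<in>L0bar F s. \<forall>X\<in>\<X>.
           AE \<omega> in M. \<omega> \<in> A \<longrightarrow> \<mu> t s m X \<omega> = \<mu> t s (\<lambda>x. if x \<in> A then m x else 0) X \<omega>)
      \<and> (\<forall>m\<in>L0bar F s. \<forall>m'\<in>L0bar F s. \<forall>X\<in>\<X>. (AE \<omega> in M. m' \<omega> \<le> m \<omega>) \<longrightarrow>
           (AE \<omega> in M. \<mu> t s m' X \<omega> \<le> \<mu> t s m X \<omega>)))"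

definition projective_update_rule ::
  "'a measure \<Rightarrow> (nat \<Rightarrow> 'a measure) \<Rightarrow> nat \<Rightarrow> ('a \<Rightarrow> real) set
     \<Rightarrow> (nat \<Rightarrow> nat \<Rightarrow> ('a \<Rightarrow> ereal) \<Rightarrow> ('a \<Rightarrow> real) \<Rightarrow> ('a \<Rightarrow> ereal)) \<Rightarrow> bool" where
  "projective_update_rule M F T \<X> \<mu> \<longleftrightarrow> update_rule M F T \<X> \<mu> \<and>
     (\<exists>\<mu>p :: nat \<Rightarrow> ('a \<Rightarrow> ereal) \<Rightarrow> ('a \<Rightarrow> ereal).
        (\<forall>t<T. \<forall>m\<in>L0bar F T. \<mu>p t m \<in> L0bar F t)
      \<and> (\<forall>t s. t < s \<and> s \<le> T \<longrightarrow> (\<forall>m\<in>L0bar F s. \<forall>X\<in>\<X>.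
           AE \<omega> in M. \<mu> t s m X \<omega> = \<mu>p t m \<omega>))
      \<and> (\<forall>t<T. \<forall>m\<in>L0bar F t. AE \<omega> in M. \<mu>p t m \<omega> = m \<omega>))"

definition acc_time_consistent where
  "acc_time_consistent M F T \<X> \<phi> \<mu> \<longleftrightarrow>
     (\<forall>t s. t < s \<and> s \<le> T \<longrightarrow> (\<forall>X\<in>\<X>. \<forall>m\<in>L0bar F s.
        (AE \<omega> in M. \<phi> s X \<omega> \<ge> m \<omega>) \<longrightarrow> (AE \<omega> in M. \<phi> t X \<omega> \<ge> \<mu> t s m X \<omega>)))"

definition rej_time_consistent where
  "rej_time_consistent M F T \<X> \<phi> \<mu> \<longleftrightarrow>
     (\<forall>t s. t < s \<and> s \<le> T \<longrightarrow> (\<forall>X\<in>\<X>. \<forall>m\<in>L0bar F s.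
        (AE \<omega> in M. \<phi> s X \<omega> \<le> m \<omega>) \<longrightarrow> (AE \<omega> in M. \<phi> t X \<omega> \<le> \<mu> t s m X \<omega>)))"

(* Essinf_t on bounded variables: the largest F_t-measurable random variable a.s. dominated
   by the argument (chosen representative; unique a.s.). *)
definition essinf_bdd :: "'a measure \<Rightarrow> 'a measure \<Rightarrow> ('a \<Rightarrow> ereal) \<Rightarrow> ('a \<Rightarrow> ereal)" where
  "essinf_bdd M Ft X = (SOME Y. Y \<in> borel_measurable Ft \<and> (AE \<omega> in M. Y \<omega> \<le> X \<omega>)
      \<and> (\<forall>Z\<in>borel_measurable Ft. (AE \<omega> in M. Z \<omega> \<le> X \<omega>) \<longrightarrow> (AE \<omega> in M. Z \<omega> \<le> Y \<omega>)))"

definition esssup_bdd :: "'a measure \<Rightarrow> 'a measure \<Rightarrow> ('a \<Rightarrow> ereal) \<Rightarrow> ('a \<Rightarrow> ereal)" where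
  "esssup_bdd M Ft X = (\<lambda>\<omega>. - essinf_bdd M Ft (\<lambda>x. - X x) \<omega>)"

definition ediff :: "ereal \<Rightarrow> ereal \<Rightarrow> ereal" where
  "ediff a b = (if a = \<infinity> \<and> b = \<infinity> then -\<infinity> else a - b)"

(* Essinf_t X := lim_n Essinf_t(X\<^sup>+ \<and> n) - lim_n Esssup_t(X\<^sup>- \<and> n); both sequences are a.s.
   nondecreasing, so their limits are represented by pointwise suprema. *)
definition cond_essinf :: "'a measure \<Rightarrow> 'a measure \<Rightarrow> ('a \<Rightarrow> ereal) \<Rightarrow> ('a \<Rightarrow> ereal)" where
  "cond_essinf M Ft X = (\<lambda>\<omega>.
     ediff (SUP n::nat. essinf_bdd M Ft (\<lambda>x. min (max (X x) 0) (ereal (real n))) \<omega>)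
           (SUP n::nat. esssup_bdd M Ft (\<lambda>x. min (max (- X x) 0) (ereal (real n))) \<omega>))"

definition cond_esssup :: "'a measure \<Rightarrow> 'a measure \<Rightarrow> ('a \<Rightarrow> ereal) \<Rightarrow> ('a \<Rightarrow> ereal)" where
  "cond_esssup M Ft X = (\<lambda>\<omega>. - cond_essinf M Ft (\<lambda>x. - X x) \<omega>)"

end

theory Submission
  imports Defs
begin

text \<open>\<open>Essinf\<^sub>t m\<^sub>s\<close> is \<open>F\<^sub>t\<close>-measurable and a.s. below \<open>m\<^sub>s\<close>; it is in particular
\<open>F\<^sub>s\<close>-measurable, and a projective update rule leaves \<open>F\<^sub>t\<close>-measurable levels unchanged.
So \<open>\<phi>\<^sub>s(X) \<ge> m\<^sub>s \<ge> Essinf\<^sub>t m\<^sub>s\<close> together with \<open>\<mu>\<close>-acceptance consistency yields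
\<open>\<phi>\<^sub>t(X) \<ge> \<mu>\<^sub>t(Essinf\<^sub>t m\<^sub>s) = Essinf\<^sub>t m\<^sub>s\<close>; rejection is symmetric. The only real work is
the existence of the bounded conditional essential infima entering \<open>Essinf\<^sub>t\<close>.\<close>

text \<open>The greatest minorant is the supremum of a sequence of minorants whose integrals
approach the supremum of all their integrals; boundedness makes these integrals finite,
so a strictly larger minorant would have a strictly larger integral.\<close>

lemma exists_greatest_measurable_minorant_ennreal:
  fixes V :: "'a \<Rightarrow> ennreal"
  assumes "finite_measure M" and sub: "subalgebra M N" and bounded: "\<And>\<omega>. V \<omega> \<le> ennreal B"
  shows "\<exists>Y\<in>borel_measurable N. (AE \<omega> in M. Y \<omega> \<le> V \<omega>) \<and>
     (\<forall>f\<in>borel_measurable N. (AE \<omega> in M. f \<omega> \<le> V \<omega>) \<longrightarrow> (AE \<omega> in M. f \<omega> \<le> Y \<omega>))"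
proof -
  interpret finite_measure M by fact
  define S where "S = {f \<in> borel_measurable N. AE \<omega> in M. f \<omega> \<le> V \<omega>}"
  have measurable_M: "f \<in> borel_measurable M" if "f \<in> borel_measurable N" for f :: "'a \<Rightarrow> ennreal"
    using measurable_from_subalg[OF sub] that by blast
  have "(\<lambda>_. 0) \<in> S" unfolding S_def by auto
  then obtain g :: "nat \<Rightarrow> ennreal" where g: "range g \<subseteq> (\<lambda>f. \<integral>\<^sup>+\<omega>. f \<omega> \<partial>M) ` S"
    and Sup_eq: "(SUP f\<in>S. \<integral>\<^sup>+\<omega>. f \<omega> \<partial>M) = (SUP i. g i)"
    using ennreal_Sup_countable_SUP[of "(\<lambda>f. \<integral>\<^sup>+\<omega>. f \<omega> \<partial>M) ` S"] by auto
  have "\<forall>i. \<exists>f\<in>S. g i = (\<integral>\<^sup>+\<omega>. f \<omega> \<partial>M)"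
    using g by blast
  then obtain fs where fs: "\<And>i. fs i \<in> S" and g_eq: "\<And>i. g i = (\<integral>\<^sup>+\<omega>. fs i \<omega> \<partial>M)"
    by metis
  define Y where "Y \<omega> = (SUP i. fs i \<omega>)" for \<omega>
  have "Y \<in> borel_measurable N"
    unfolding Y_def using fs by (intro borel_measurable_SUP) (auto simp: S_def)
  moreover have "AE \<omega> in M. \<forall>i. fs i \<omega> \<le> V \<omega>"
    using fs unfolding S_def by (auto intro: AE_all_countable[THEN iffD2])
  then have Y_le: "AE \<omega> in M. Y \<omega> \<le> V \<omega>"
    by eventually_elim (auto simp: Y_def intro: SUP_least)
  ultimately have "Y \<in> S" unfolding S_def by blast
  have "(\<integral>\<^sup>+\<omega>. Y \<omega> \<partial>M) \<le> (\<integral>\<^sup>+\<omega>. ennreal B \<partial>M)"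
    using Y_le by (intro nn_integral_mono_AE) (auto elim!: eventually_mono intro: order_trans[OF _ bounded])
  then have Y_finite: "(\<integral>\<^sup>+\<omega>. Y \<omega> \<partial>M) \<noteq> \<infinity>"
    by (auto simp: top_unique ennreal_mult_eq_top_iff)
  have maximal: "AE \<omega> in M. h \<omega> \<le> Y \<omega>" if h: "h \<in> S" "\<And>\<omega>. Y \<omega> \<le> h \<omega>" for h
  proof (rule ccontr)
    assume "\<not> (AE \<omega> in M. h \<omega> \<le> Y \<omega>)"
    then have "(\<integral>\<^sup>+\<omega>. Y \<omega> \<partial>M) < (\<integral>\<^sup>+\<omega>. h \<omega> \<partial>M)"
      using h \<open>Y \<in> S\<close> Y_finite by (intro nn_integral_less) (auto simp: S_def measurable_M)
    also have "\<dots> \<le> (SUP i. g i)"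
      using h(1) unfolding Sup_eq[symmetric] by (rule SUP_upper)
    also have "\<dots> \<le> (\<integral>\<^sup>+\<omega>. Y \<omega> \<partial>M)"
      unfolding g_eq Y_def by (intro SUP_least nn_integral_mono SUP_upper) auto
    finally show False by simp
  qed
  show ?thesis
  proof (intro bexI conjI ballI impI)
    fix f assume "f \<in> borel_measurable N" "AE \<omega> in M. f \<omega> \<le> V \<omega>"
    then have "(\<lambda>\<omega>. max (Y \<omega>) (f \<omega>)) \<in> S"
      using \<open>Y \<in> S\<close> unfolding S_def by auto
    then have "AE \<omega> in M. max (Y \<omega>) (f \<omega>) \<le> Y \<omega>" by (rule maximal) auto
    then show "AE \<omega> in M. f \<omega> \<le> Y \<omega>" by eventually_elim auto
  qed (use \<open>Y \<in> S\<close> in \<open>auto simp: S_def\<close>)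
qed

lemma le_enn2ereal_e2ennreal: "x \<le> enn2ereal (e2ennreal x)"
  by (metis enn2ereal_e2ennreal enn2ereal_nonneg linorder_linear order_trans)

lemma exists_greatest_measurable_minorant:
  fixes W :: "'a \<Rightarrow> ereal"
  assumes "finite_measure M" "subalgebra M N"
    and lower: "\<And>\<omega>. ereal a \<le> W \<omega>" and upper: "\<And>\<omega>. W \<omega> \<le> ereal b"
  shows "\<exists>Y. Y \<in> borel_measurable N \<and> (AE \<omega> in M. Y \<omega> \<le> W \<omega>)
      \<and> (\<forall>Z\<in>borel_measurable N. (AE \<omega> in M. Z \<omega> \<le> W \<omega>) \<longrightarrow> (AE \<omega> in M. Z \<omega> \<le> Y \<omega>))"
proof -
  define shift :: "ereal \<Rightarrow> ennreal" where "shift x = e2ennreal (x - ereal a)" for x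
  have shift_mono: "shift x \<le> shift y" if "x \<le> y" for x y
    unfolding shift_def using that by (intro e2ennreal_mono ereal_minus_mono) auto
  have le_unshift: "x \<le> enn2ereal (shift x) + ereal a" for x
    using le_enn2ereal_e2ennreal[of "x - ereal a"] by (simp add: shift_def ereal_minus_le_iff)
  have unshift_W: "enn2ereal (shift (W \<omega>)) + ereal a = W \<omega>" for \<omega>
    using lower[of \<omega>] by (cases "W \<omega>") (auto simp: shift_def)
  have bounded: "shift (W \<omega>) \<le> ennreal (b - a)" for \<omega>
    using shift_mono[OF upper[of \<omega>]] by (simp add: shift_def e2ennreal_ereal)
  from exists_greatest_measurable_minorant_ennreal[OF assms(1,2), of "\<lambda>\<omega>. shift (W \<omega>)", OF bounded]
  obtain Y where Y: "Y \<in> borel_measurable N" "AE \<omega> in M. Y \<omega> \<le> shift (W \<omega>)"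
    and greatest: "\<forall>f\<in>borel_measurable N. (AE \<omega> in M. f \<omega> \<le> shift (W \<omega>))
      \<longrightarrow> (AE \<omega> in M. f \<omega> \<le> Y \<omega>)"
    by (elim bexE conjE)
  show ?thesis
  proof (intro exI conjI ballI impI)
    show "(\<lambda>\<omega>. enn2ereal (Y \<omega>) + ereal a) \<in> borel_measurable N"
      using Y(1) by (measurable; simp)
    show "AE \<omega> in M. enn2ereal (Y \<omega>) + ereal a \<le> W \<omega>"
      using Y(2)
    proof eventually_elim
      case (elim \<omega>)
      then have "enn2ereal (Y \<omega>) + ereal a \<le> enn2ereal (shift (W \<omega>)) + ereal a"
        by (intro add_right_mono) (simp add: less_eq_ennreal.rep_eq)
      then show ?case by (simp only: unshift_W)
    qed
    fix Z assume Z: "Z \<in> borel_measurable N" "AE \<omega> in M. Z \<omega> \<le> W \<omega>"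
    have "(\<lambda>\<omega>. shift (Z \<omega>)) \<in> borel_measurable N"
      using Z(1) unfolding shift_def by (measurable; simp)
    moreover have "AE \<omega> in M. shift (Z \<omega>) \<le> shift (W \<omega>)"
      using Z(2) by eventually_elim (rule shift_mono)
    ultimately have "AE \<omega> in M. shift (Z \<omega>) \<le> Y \<omega>" by (rule greatest[rule_format])
    then show "AE \<omega> in M. Z \<omega> \<le> enn2ereal (Y \<omega>) + ereal a"
    proof eventually_elim
      case (elim \<omega>)
      then have "enn2ereal (shift (Z \<omega>)) + ereal a \<le> enn2ereal (Y \<omega>) + ereal a"
        by (intro add_right_mono) (simp add: less_eq_ennreal.rep_eq)
      with le_unshift show ?case by (rule order_trans)
    qed
  qed
qed

lemma essinf_bdd_minorant:
  assumes "finite_measure M" "subalgebra M N"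
    and "\<And>\<omega>. ereal a \<le> W \<omega>" "\<And>\<omega>. W \<omega> \<le> ereal b"
  shows "essinf_bdd M N W \<in> borel_measurable N \<and> (AE \<omega> in M. essinf_bdd M N W \<omega> \<le> W \<omega>)"
  using someI_ex[OF exists_greatest_measurable_minorant[where W = W, OF assms]]
  unfolding essinf_bdd_def by (elim conjE) (intro conjI)

lemma ediff_le_from_part_bounds:
  fixes x A B :: ereal
  assumes A: "A \<le> max x 0" and B: "\<And>n::nat. min (max (- x) 0) (ereal (real n)) \<le> B"
  shows "ediff A B \<le> x"
proof (cases x)
  case (real r)
  obtain n :: nat where n: "max (- r) 0 \<le> real n" by (meson real_arch_simple)
  have "ereal (max (- r) 0) \<le> B"
    using B[of n] n real by (auto simp: min_def max_def zero_ereal_def split: if_splits)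
  moreover have A': "A \<le> ereal (max r 0)"
    using A real by (auto simp: max_def zero_ereal_def split: if_splits)
  ultimately have "A - B \<le> ereal (max r 0) - ereal (max (- r) 0)" by (intro ereal_minus_mono)
  also have "\<dots> = x" using real by (simp add: max_def)
  finally show ?thesis using A' unfolding ediff_def by auto
next
  case MInf
  have "B = \<infinity>"
  proof (rule ccontr)
    assume "B \<noteq> \<infinity>"
    moreover have "0 \<le> B" using B[of 0] MInf by (simp add: zero_ereal_def)
    ultimately obtain r where r: "B = ereal r" by (cases B) auto
    obtain n :: nat where "r < real n" using reals_Archimedean2 by blast
    then show False using B[of n] MInf r by simp
  qed
  moreover have "A \<le> 0" using A MInf by simp
  ultimately show ?thesis using MInf unfolding ediff_def by (cases A) auto
qed simp

lemma cond_essinf_minorant: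
  assumes "finite_measure M" "subalgebra M N"
  shows "cond_essinf M N m \<in> borel_measurable N \<and> (AE \<omega> in M. cond_essinf M N m \<omega> \<le> m \<omega>)"
proof -
  define pos where "pos n \<omega> = min (max (m \<omega>) 0) (ereal (real n))" for n :: nat and \<omega>
  define neg where "neg n \<omega> = min (max (- m \<omega>) 0) (ereal (real n))" for n :: nat and \<omega>
  define P where "P n = essinf_bdd M N (pos n)" for n
  define Q where "Q n = essinf_bdd M N (\<lambda>\<omega>. - neg n \<omega>)" for n
  have P: "P n \<in> borel_measurable N \<and> (AE \<omega> in M. P n \<omega> \<le> pos n \<omega>)" for n
    unfolding P_def by (rule essinf_bdd_minorant[OF assms, of 0 _ "real n"])
      (auto simp: pos_def zero_ereal_def)
  have Q: "Q n \<in> borel_measurable N \<and> (AE \<omega> in M. Q n \<omega> \<le> - neg n \<omega>)" for n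
    unfolding Q_def by (rule essinf_bdd_minorant[OF assms, of "- real n" _ 0])
      (auto simp: neg_def zero_ereal_def [symmetric] simp flip: uminus_ereal.simps(1))
  have eq: "cond_essinf M N m = (\<lambda>\<omega>. ediff (SUP n. P n \<omega>) (SUP n. - Q n \<omega>))"
    unfolding cond_essinf_def P_def Q_def pos_def neg_def esssup_bdd_def by simp
  have "(\<lambda>\<omega>. SUP n. P n \<omega>) \<in> borel_measurable N" "(\<lambda>\<omega>. SUP n. - Q n \<omega>) \<in> borel_measurable N"
    using P Q by (auto intro!: borel_measurable_SUP)
  then have "cond_essinf M N m \<in> borel_measurable N"
    unfolding eq ediff_def by measurable
  moreover have "AE \<omega> in M. (\<forall>n. P n \<omega> \<le> pos n \<omega>) \<and> (\<forall>n. Q n \<omega> \<le> - neg n \<omega>)"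
    using P Q by (auto simp: AE_all_countable)
  then have "AE \<omega> in M. cond_essinf M N m \<omega> \<le> m \<omega>"
  proof eventually_elim
    case (elim \<omega>)
    show ?case unfolding eq
    proof (rule ediff_le_from_part_bounds)
      show "(SUP n. P n \<omega>) \<le> max (m \<omega>) 0"
        using elim by (auto simp: pos_def intro!: SUP_least elim: order_trans)
      fix n
      have "neg n \<omega> \<le> - Q n \<omega>"
        using elim by (metis ereal_minus_le_minus ereal_uminus_uminus)
      then show "min (max (- m \<omega>) 0) (ereal (real n)) \<le> (SUP n. - Q n \<omega>)"
        unfolding neg_def by (intro SUP_upper2[of n]) auto
    qed
  qed
  ultimately show ?thesis by blast
qed

lemma cond_esssup_majorant:
  assumes "finite_measure M" "subalgebra M N"
  shows "cond_esssup M N m \<in> borel_measurable N \<and> (AE \<omega> in M. m \<omega> \<le> cond_esssup M N m \<omega>)"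
  using cond_essinf_minorant[OF assms, of "\<lambda>\<omega>. - m \<omega>"] unfolding cond_esssup_def
  by (auto elim!: eventually_mono) (metis ereal_minus_le_minus ereal_uminus_uminus)

lemma L0bar_mono:
  assumes "filtered_setting M F T" "t \<le> s" "s \<le> T"
  shows "L0bar F t \<subseteq> L0bar F s"
proof -
  have "subalgebra M (F t)" "subalgebra M (F s)" and sets: "sets (F t) \<subseteq> sets (F s)"
    using assms unfolding filtered_setting_def by auto
  then have "space (F t) = space (F s)" unfolding subalgebra_def by simp
  with sets show ?thesis unfolding L0bar_def by (intro measurable_mono) auto
qed

lemma projective_update_rule_AE_eq_self:
  assumes setting: "filtered_setting M F T" and proj: "projective_update_rule M F T \<X> \<mu>"
    and ts: "t < s" "s \<le> T" and m: "m \<in> L0bar F t" and X: "X \<in> \<X>"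
  shows "AE \<omega> in M. \<mu> t s m X \<omega> = m \<omega>"
proof -
  obtain \<mu>p where
    factor: "\<forall>t s. t < s \<and> s \<le> T \<longrightarrow> (\<forall>m\<in>L0bar F s. \<forall>X\<in>\<X>. AE \<omega> in M. \<mu> t s m X \<omega> = \<mu>p t m \<omega>)"
    and fixes_Ft: "\<forall>t<T. \<forall>m\<in>L0bar F t. AE \<omega> in M. \<mu>p t m \<omega> = m \<omega>"
    using proj unfolding projective_update_rule_def by (elim conjE exE) (rule that)
  have "m \<in> L0bar F s" using L0bar_mono[OF setting, of t s] ts m by auto
  then have "AE \<omega> in M. \<mu> t s m X \<omega> = \<mu>p t m \<omega>" using factor ts X by blast
  moreover have "AE \<omega> in M. \<mu>p t m \<omega> = m \<omega>" using fixes_Ft ts m by simp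
  ultimately show ?thesis by eventually_elim simp
qed

lemma filtered_setting_subalgebra:
  assumes "filtered_setting M F T" "t \<le> T"
  shows "finite_measure M" "subalgebra M (F t)"
  using assms unfolding filtered_setting_def by (auto intro: prob_space.finite_measure)

lemma acc_time_consistent_imp_weak:
  assumes setting: "filtered_setting M F T" and proj: "projective_update_rule M F T \<X> \<mu>"
    and acc: "acc_time_consistent M F T \<X> \<phi> \<mu>"
    and ts: "t < s" "s \<le> T" and X: "X \<in> \<X>" and m: "m \<in> L0bar F s"
    and accepted: "AE \<omega> in M. m \<omega> \<le> \<phi> s X \<omega>"
  shows "AE \<omega> in M. cond_essinf M (F t) m \<omega> \<le> \<phi> t X \<omega>"
proof -
  define m' where "m' = cond_essinf M (F t) m"
  have m'_Ft: "m' \<in> L0bar F t" and m'_le: "AE \<omega> in M. m' \<omega> \<le> m \<omega>"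
    using cond_essinf_minorant[OF filtered_setting_subalgebra[OF setting]] ts
    unfolding m'_def L0bar_def by auto
  then have "m' \<in> L0bar F s" using L0bar_mono[OF setting, of t s] ts by auto
  moreover have "AE \<omega> in M. m' \<omega> \<le> \<phi> s X \<omega>"
    using m'_le accepted by eventually_elim auto
  ultimately have "AE \<omega> in M. \<mu> t s m' X \<omega> \<le> \<phi> t X \<omega>"
    using ts X by (intro acc[unfolded acc_time_consistent_def, rule_format]) auto
  moreover have "AE \<omega> in M. \<mu> t s m' X \<omega> = m' \<omega>"
    using projective_update_rule_AE_eq_self[OF setting proj ts m'_Ft X] .
  ultimately show ?thesis unfolding m'_def by eventually_elim simp
qed

lemma rej_time_consistent_imp_weak:
  assumes setting: "filtered_setting M F T" and proj: "projective_update_rule M F T \<X> \<mu>"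
    and rej: "rej_time_consistent M F T \<X> \<phi> \<mu>"
    and ts: "t < s" "s \<le> T" and X: "X \<in> \<X>" and m: "m \<in> L0bar F s"
    and rejected: "AE \<omega> in M. \<phi> s X \<omega> \<le> m \<omega>"
  shows "AE \<omega> in M. \<phi> t X \<omega> \<le> cond_esssup M (F t) m \<omega>"
proof -
  define m' where "m' = cond_esssup M (F t) m"
  have m'_Ft: "m' \<in> L0bar F t" and m'_ge: "AE \<omega> in M. m \<omega> \<le> m' \<omega>"
    using cond_esssup_majorant[OF filtered_setting_subalgebra[OF setting]] ts
    unfolding m'_def L0bar_def by auto
  then have "m' \<in> L0bar F s" using L0bar_mono[OF setting, of t s] ts by auto
  moreover have "AE \<omega> in M. \<phi> s X \<omega> \<le> m' \<omega>"
    using m'_ge rejected by eventually_elim auto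
  ultimately have "AE \<omega> in M. \<phi> t X \<omega> \<le> \<mu> t s m' X \<omega>"
    using ts X by (intro rej[unfolded rej_time_consistent_def, rule_format]) auto
  moreover have "AE \<omega> in M. \<mu> t s m' X \<omega> = m' \<omega>"
    using projective_update_rule_AE_eq_self[OF setting proj ts m'_Ft X] .
  ultimately show ?thesis unfolding m'_def by eventually_elim simp
qed

theorem proposition4p5:
  fixes M :: "'a measure" and F :: "nat \<Rightarrow> 'a measure" and T :: nat and p :: ennreal
    and \<phi> :: "nat \<Rightarrow> ('a \<Rightarrow> real) \<Rightarrow> ('a \<Rightarrow> ereal)"
    and \<mu> :: "nat \<Rightarrow> nat \<Rightarrow> ('a \<Rightarrow> ereal) \<Rightarrow> ('a \<Rightarrow> real) \<Rightarrow> ('a \<Rightarrow> ereal)"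
  assumes setting: "filtered_setting M F T"
    and p: "p \<in> {0, 1, \<infinity>}"
    and LM: "dynamic_LM_measure M F T (Lp_space M F T p) \<phi>"
    and proj: "projective_update_rule M F T (Lp_space M F T p) \<mu>"
  shows "(acc_time_consistent M F T (Lp_space M F T p) \<phi> \<mu> \<longrightarrow>
           (\<forall>t s. t < s \<and> s \<le> T \<longrightarrow> (\<forall>X\<in>Lp_space M F T p. \<forall>m\<in>L0bar F s.
              (AE \<omega> in M. \<phi> s X \<omega> \<ge> m \<omega>) \<longrightarrow>
              (AE \<omega> in M. \<phi> t X \<omega> \<ge> cond_essinf M (F t) m \<omega>))))
       \<and> (rej_time_consistent M F T (Lp_space M F T p) \<phi> \<mu> \<longrightarrow>
           (\<forall>t s. t < s \<and> s \<le> T \<longrightarrow> (\<forall>X\<in>Lp_space M F T p. \<forall>m\<in>L0bar F s.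
              (AE \<omega> in M. \<phi> s X \<omega> \<le> m \<omega>) \<longrightarrow>
              (AE \<omega> in M. \<phi> t X \<omega> \<le> cond_esssup M (F t) m \<omega>))))"
  by (intro conjI impI allI ballI; elim conjE)
    (assumption | rule acc_time_consistent_imp_weak[OF setting proj]
      rej_time_consistent_imp_weak[OF setting proj])+

end
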